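(* Let $m,d\ge1$, $\kappa\in(0,1]$, $\delta\in(0,0.1)$ and $D:=\sqrt{\log(md/\delta)}$. Let $W(0)\in\mathbb{R}^{d\times m}$ have i.i.d. $\mathcal N(0,I_d)$ columns and $a\in\{\pm1\}^m$ have i.i.d. uniform entries (independent), and set $W'(0):=W(0)$. Let $x\in\mathbb{R}^d$ with $\|x\|_2=1$ and let $\epsilon_{\rm init}>0$. If $\kappa\le O\big(\epsilon_{\rm init}/(\sqrt d\,D^2)\big)$, then with probability at least $1-\delta$, $|f(x,W(0),a)-f'(x,W'(0),a)|\le\epsilon_{\rm init}$.
   Context: $O(\cdot)$ hides absolute constants (sufficiently small). For $w\in\mathbb{R}^d$: $E(w):=\frac1d\sum_k w_k$, $V(w):=\frac1d\|w-E(w)\mathbf 1_d\|_2^2$, $\widetilde w:=\mathrm{Sign}\big((w-E(w)\mathbf 1_d)/\sqrt{V(w)}\big)\in\{\pm1\}^d$ with $\mathrm{Sign}_k(z)=+1$ if $z_k\ge0$, $-1$ otherwise; $\mathrm{dq}(\langle\widetilde w,x\rangle):=\sqrt{V(w)}\langle\widetilde w,x\rangle+E(w)\langle\mathbf 1_d,x\rangle$. The 1-bit network is $f(x,W,a):=\frac{\kappa}{\sqrt m}\sum_{r=1}^m a_r\mathrm{ReLU}(\mathrm{dq}(\langle\widetilde w_r,x\rangle))$ and the full-precision network is $f'(x,W,a):=\frac{\kappa}{\sqrt m}\sum_{r=1}^m a_r\mathrm{ReLU}(\langle w_r,x\rangle)$, where $W=[w_1,\dots,w_m]$ and $\mathrm{ReLU}(z)=\max\{z,0\}$.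 *)

theory Defs
  imports "HOL-Probability.Probability"
begin

(* Vectors in R^d are represented as functions nat => real, only the coordinates k < d matter. *)

definition vmean :: "nat \<Rightarrow> (nat \<Rightarrow> real) \<Rightarrow> real" where
  "vmean d w = (\<Sum>k<d. w k) / real d"

definition vvar :: "nat \<Rightarrow> (nat \<Rightarrow> real) \<Rightarrow> real" where
  "vvar d w = (\<Sum>k<d. (w k - vmean d w)\<^sup>2) / real d"

definition sgnvec :: "nat \<Rightarrow> (nat \<Rightarrow> real) \<Rightarrow> nat \<Rightarrow> real" where
  "sgnvec d w k = (if (w k - vmean d w) / sqrt (vvar d w) \<ge> 0 then 1 else -1)"

definition ip :: "nat \<Rightarrow> (nat \<Rightarrow> real) \<Rightarrow> (nat \<Rightarrow> real) \<Rightarrow> real" where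
  "ip d u v = (\<Sum>k<d. u k * v k)"

definition dq :: "nat \<Rightarrow> (nat \<Rightarrow> real) \<Rightarrow> (nat \<Rightarrow> real) \<Rightarrow> real" where
  "dq d w x = sqrt (vvar d w) * ip d (sgnvec d w) x + vmean d w * ip d (\<lambda>_. 1) x"

definition relu :: "real \<Rightarrow> real" where
  "relu z = max z 0"

(* W r = column w_r of W; a r = a_r *)
definition f_bin :: "real \<Rightarrow> nat \<Rightarrow> nat \<Rightarrow> (nat \<Rightarrow> real) \<Rightarrow> (nat \<Rightarrow> nat \<Rightarrow> real) \<Rightarrow> (nat \<Rightarrow> real) \<Rightarrow> real" where
  "f_bin \<kappa> m d x W a = \<kappa> / sqrt (real m) * (\<Sum>r<m. a r * relu (dq d (W r) x))"

definition f_full :: "real \<Rightarrow> nat \<Rightarrow> nat \<Rightarrow> (nat \<Rightarrow> real) \<Rightarrow> (nat \<Rightarrow> nat \<Rightarrow> real) \<Rightarrow> (nat \<Rightarrow> real) \<Rightarrow> real" where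
  "f_full \<kappa> m d x W a = \<kappa> / sqrt (real m) * (\<Sum>r<m. a r * relu (ip d (W r) x))"

(* Joint law of (W(0), a): entries W_{k r} i.i.d. N(0,1) (so the columns are i.i.d. N(0,I_d)),
   independent of a with i.i.d. uniform +-1 entries. *)
definition init_measure :: "nat \<Rightarrow> nat \<Rightarrow> (((nat \<times> nat) \<Rightarrow> real) \<times> (nat \<Rightarrow> real)) measure" where
  "init_measure m d =
     (PiM ({..<m} \<times> {..<d}) (\<lambda>_. std_normal_distribution))
     \<Otimes>\<^sub>M (PiM {..<m} (\<lambda>_. measure_pmf (pmf_of_set {-1, 1::real})))"

definition Wcols :: "((nat \<times> nat) \<Rightarrow> real) \<Rightarrow> nat \<Rightarrow> nat \<Rightarrow> real" where
  "Wcols w r k = w (r, k)"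

end

theory Submission
  imports Defs
begin

(* With probability at least 1 - delta/2 all m d Gaussian weights satisfy |W_rk| < T, where
   T = sqrt (2 e k) and k = ceiling (ln (2 m d / delta)): Markov's inequality for the moment
   E g^(2k) = (2k)! / (2^k k!) <= (2k)^k gives P(|g| >= T) <= exp (-k), and a union bound
   over the m d entries follows. For such weights every column has sqrt V(w) <= 2 T and
   |E(w)| <= T, hence |dq(<w~, x>) - <w, x>| <= 4 T sqrt d; since ReLU is 1-Lipschitz,
   f - f' is kappa / sqrt m times a Rademacher sum whose coefficients are bounded by 4 T sqrt d.
   Conditionally on W, Hoeffding's inequality bounds it with probability 1 - delta/2, and
   integrating over W gives probability (1 - delta/2)^2 >= 1 - delta. As k and ln (4/delta)
   are both at most 2 ln (m d / delta), the deviation is at most 28 kappa sqrt d ln (m d / delta). *)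

lemma real_mult_ge_one:
  assumes "0 < m" "0 < n"
  shows "1 \<le> real m * real n"
  using assms mult_mono[of 1 "real m" 1 "real n"] by simp

lemma fact_double_div_le: "fact (2 * k) / (2 ^ k * fact k) \<le> (2 * real k) ^ k"
proof -
  have "fact (2 * k) div fact k \<le> (2 * k) ^ k"
    using fact_div_fact_le_pow[of k "2 * k"] by simp
  moreover have "fact k dvd (fact (2 * k) :: nat)"
    by (rule fact_dvd) simp
  ultimately have "fact (2 * k) \<le> fact k * (2 * k) ^ k"
    by (metis dvd_mult_div_cancel mult_le_mono2)
  then have "real (fact (2 * k)) \<le> real (fact k * (2 * k) ^ k)"
    by (simp only: of_nat_le_iff)
  then have "fact (2 * k) / fact k \<le> (2 * real k) ^ k"
    by (simp add: divide_le_eq mult.commute)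
  moreover have "fact (2 * k) / (2 ^ k * fact k) \<le> fact (2 * k) / (fact k :: real)"
    by (intro divide_left_mono) auto
  ultimately show ?thesis
    by linarith
qed

lemma std_normal_tail_le:
  assumes "T > 0"
  shows "measure std_normal_distribution {g. T \<le> \<bar>g\<bar>} \<le> (2 * real k / T\<^sup>2) ^ k"
proof (cases "k = 0")
  case True
  interpret prob_space std_normal_distribution
    by (simp add: prob_space_normal_density)
  show ?thesis
    using True by simp
next
  case False
  have integrable: "integrable std_normal_distribution (\<lambda>g. g ^ (2 * k))"
    by (subst integrable_density) (auto intro: integrable_std_normal_moment)
  have moment: "(\<integral>g. g ^ (2 * k) \<partial>std_normal_distribution) = fact (2 * k) / (2 ^ k * fact k)"
    by (subst integral_density) (auto simp: integral_std_normal_moment_even)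
  have "{g. T \<le> \<bar>g\<bar>} = {g \<in> space std_normal_distribution. T ^ (2 * k) \<le> g ^ (2 * k)}"
  proof -
    have "T \<le> \<bar>g\<bar> \<longleftrightarrow> T ^ (2 * k) \<le> \<bar>g\<bar> ^ (2 * k)" for g
      using assms False by (simp add: power_mono_iff)
    then show ?thesis
      by (auto simp: power_even_abs)
  qed
  also have "measure std_normal_distribution \<dots> \<le> (fact (2 * k) / (2 ^ k * fact k)) / T ^ (2 * k)"
    using integral_Markov_inequality_measure[OF integrable, of "space std_normal_distribution" "T ^ (2 * k)"]
      assms moment
    by auto
  also have "\<dots> \<le> (2 * real k) ^ k / T ^ (2 * k)"
    using assms fact_double_div_le[of k] by (intro divide_right_mono) auto
  also have "\<dots> = (2 * real k / T\<^sup>2) ^ k"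
    by (simp add: power_divide power_mult)
  finally show ?thesis .
qed

lemma measurable_PiM_component_borel:
  assumes "(\<lambda>x. x) \<in> borel_measurable N"
  shows "(\<lambda>w. w i) \<in> borel_measurable (PiM I (\<lambda>_. N))"
proof (cases "i \<in> I")
  case True
  show ?thesis
    by (rule measurable_compose[OF measurable_component_singleton[OF True] assms])
next
  case False
  then have "w i = undefined" if "w \<in> space (PiM I (\<lambda>_. N))" for w
    using that by (auto simp: space_PiM PiE_def extensional_def)
  then show ?thesis
    by (subst measurable_cong[where g = "\<lambda>_. undefined"]) auto
qed

abbreviation rademacher :: "real measure" where
  "rademacher \<equiv> measure_pmf (pmf_of_set {-1, 1})"

lemma measurable_std_normal_component [measurable]:
  "(\<lambda>w. w i) \<in> borel_measurable (PiM I (\<lambda>_. std_normal_distribution))"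
  by (rule measurable_PiM_component_borel) simp

lemma measurable_rademacher_component [measurable]:
  "(\<lambda>a. a i) \<in> borel_measurable (PiM I (\<lambda>_. rademacher))"
  by (rule measurable_PiM_component_borel) simp

lemma measure_PiM_exists_component_le:
  assumes N: "prob_space N" and "finite I" and S: "S \<in> sets N"
  shows "measure (PiM I (\<lambda>_. N)) {w \<in> space (PiM I (\<lambda>_. N)). \<exists>i\<in>I. w i \<in> S}
           \<le> real (card I) * measure N S"
proof -
  let ?M = "PiM I (\<lambda>_. N)"
  interpret prob_space ?M
    by (intro prob_space_PiM N)
  have component_event: "(\<lambda>w. w i) -` S \<inter> space ?M \<in> sets ?M" if "i \<in> I" for i
    by (rule measurable_sets[OF measurable_component_singleton[OF that] S])
  have component_prob: "measure ?M ((\<lambda>w. w i) -` S \<inter> space ?M) = measure N S" if "i \<in> I" for i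
    using measure_distr[OF measurable_component_singleton[OF that] S] distr_PiM_component[OF N that]
    by simp
  have "{w \<in> space ?M. \<exists>i\<in>I. w i \<in> S} = (\<Union>i\<in>I. (\<lambda>w. w i) -` S \<inter> space ?M)"
    by auto
  also have "measure ?M \<dots> \<le> (\<Sum>i\<in>I. measure ?M ((\<lambda>w. w i) -` S \<inter> space ?M))"
    using component_event by (intro finite_measure_subadditive_finite \<open>finite I\<close>) auto
  also have "\<dots> = real (card I) * measure N S"
    by (simp add: component_prob)
  finally show ?thesis .
qed

definition normal_max_bound :: "nat \<Rightarrow> real \<Rightarrow> real" where
  "normal_max_bound n \<delta> = sqrt (2 * exp 1 * nat \<lceil>ln (real n / \<delta>)\<rceil>)"

lemma normal_max_bound_pos:
  assumes "0 < \<delta>" "\<delta> < real n"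
  shows "0 < normal_max_bound n \<delta>"
  using assms by (simp add: normal_max_bound_def)

lemma std_normal_tail_max_bound_le:
  assumes "0 < \<delta>" "\<delta> < real n"
  shows "measure std_normal_distribution {g. normal_max_bound n \<delta> \<le> \<bar>g\<bar>} \<le> \<delta> / real n"
proof -
  define k where "k = nat \<lceil>ln (real n / \<delta>)\<rceil>"
  define T where "T = normal_max_bound n \<delta>"
  have ln_pos: "0 < ln (real n / \<delta>)"
    using assms by simp
  then have "real k = of_int \<lceil>ln (real n / \<delta>)\<rceil>"
    by (simp add: k_def)
  then have k_ge: "ln (real n / \<delta>) \<le> real k"
    by simp
  have T_sq: "T\<^sup>2 = 2 * exp 1 * real k" and "0 < T"
    using ln_pos k_ge by (simp_all add: T_def normal_max_bound_def k_def)
  have "measure std_normal_distribution {g. T \<le> \<bar>g\<bar>} \<le> (2 * real k / T\<^sup>2) ^ k"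
    by (rule std_normal_tail_le[OF \<open>0 < T\<close>])
  also have "\<dots> = exp (- real k)"
    using ln_pos k_ge by (simp add: T_sq exp_minus inverse_eq_divide power_divide flip: exp_of_nat_mult)
  also have "\<dots> \<le> exp (- ln (real n / \<delta>))"
    using k_ge by simp
  also have "\<dots> = \<delta> / real n"
    using ln_pos assms by (simp add: exp_minus)
  finally show ?thesis
    by (simp add: T_def)
qed

lemma std_normal_PiM_all_bounded_prob:
  assumes "finite I" "0 < \<delta>" "\<delta> < real (card I)"
  shows "1 - \<delta> \<le> measure (PiM I (\<lambda>_. std_normal_distribution))
           {w \<in> space (PiM I (\<lambda>_. std_normal_distribution)). \<forall>i\<in>I. \<bar>w i\<bar> < normal_max_bound (card I) \<delta>}"
proof -
  let ?M = "PiM I (\<lambda>_. std_normal_distribution)"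
  let ?T = "normal_max_bound (card I) \<delta>"
  let ?G = "{w \<in> space ?M. \<forall>i\<in>I. \<bar>w i\<bar> < ?T}"
  have N: "prob_space std_normal_distribution"
    by (simp add: prob_space_normal_density)
  interpret prob_space ?M
    by (intro prob_space_PiM N)
  have "0 < real (card I)"
    using assms by linarith
  have "space ?M - ?G = {w \<in> space ?M. \<exists>i\<in>I. w i \<in> {g. ?T \<le> \<bar>g\<bar>}}"
    by (auto simp: not_less)
  then have "measure ?M (space ?M - ?G) \<le> real (card I) * measure std_normal_distribution {g. ?T \<le> \<bar>g\<bar>}"
    by (simp only:) (rule measure_PiM_exists_component_le[OF N \<open>finite I\<close>], simp)
  also have "\<dots> \<le> real (card I) * (\<delta> / real (card I))"
    using std_normal_tail_max_bound_le[OF assms(2,3)] by (intro mult_left_mono) auto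
  also have "\<dots> = \<delta>"
    using \<open>0 < real (card I)\<close> by simp
  finally have "measure ?M (space ?M - ?G) \<le> \<delta>" .
  moreover have "?G \<in> sets ?M"
    using \<open>finite I\<close> by measurable
  ultimately show ?thesis
    by (simp add: prob_compl)
qed

lemma indep_vars_PiM_components:
  assumes M: "\<And>i. i \<in> I \<Longrightarrow> prob_space (M i)" and "I \<noteq> {}"
  shows "prob_space.indep_vars (PiM I M) M (\<lambda>i \<omega>. \<omega> i) I"
proof -
  interpret prob_space "PiM I M"
    by (intro prob_space_PiM M)
  have "distr (PiM I M) (PiM I M) (\<lambda>\<omega>. \<lambda>i\<in>I. \<omega> i) = distr (PiM I M) (PiM I M) (\<lambda>\<omega>. \<omega>)"
    by (intro distr_cong) (auto simp: space_PiM PiE_def extensional_restrict)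
  also have "\<dots> = PiM I (\<lambda>i. distr (PiM I M) (M i) (\<lambda>\<omega>. \<omega> i))"
    unfolding distr_id by (intro PiM_cong refl distr_PiM_component[symmetric] M)
  finally show ?thesis
    using \<open>I \<noteq> {}\<close> by (subst indep_vars_iff_distr_eq_PiM') auto
qed

lemma rademacher_sum_tail_le:
  fixes Y :: "'i \<Rightarrow> real"
  assumes "finite I" "I \<noteq> {}" "0 < B" "\<And>i. i \<in> I \<Longrightarrow> \<bar>Y i\<bar> \<le> B" "0 \<le> s"
  shows "measure (PiM I (\<lambda>_. rademacher))
           {a \<in> space (PiM I (\<lambda>_. rademacher)). s \<le> \<bar>\<Sum>i\<in>I. a i * Y i\<bar>}
         \<le> 2 * exp (- s\<^sup>2 / (2 * real (card I) * B\<^sup>2))"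
proof -
  let ?M = "PiM I (\<lambda>_. rademacher)"
  have R: "prob_space rademacher"
    by (rule measure_pmf.prob_space_axioms)
  interpret prob_space ?M
    by (intro prob_space_PiM R)
  have indep: "indep_vars (\<lambda>_. borel) (\<lambda>i a. a i * Y i) I"
    using indep_vars_compose2[OF indep_vars_PiM_components[OF R \<open>I \<noteq> {}\<close>], of "\<lambda>i v. v * Y i"]
    by simp
  have bounded: "AE a in ?M. a i * Y i \<in> {-B..B}" if "i \<in> I" for i
  proof -
    have "AE a in ?M. a i \<in> {-1, 1}"
      using that AE_measure_pmf[of "pmf_of_set {-1, 1::real}"] by (intro AE_PiM_component[OF R]) auto
    then show ?thesis
      by (rule eventually_mono) (use assms(4)[OF that] in auto)
  qed
  have centred: "expectation (\<lambda>a. a i * Y i) = 0" if "i \<in> I" for i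
  proof -
    have "expectation (\<lambda>a. a i * Y i) = integral\<^sup>L (distr ?M rademacher (\<lambda>a. a i)) (\<lambda>v. v * Y i)"
      using that by (subst integral_distr[OF measurable_component_singleton]) auto
    also have "\<dots> = 0"
      using that by (simp add: distr_PiM_component[OF R] integral_pmf_of_set)
    finally show ?thesis .
  qed
  interpret Hoeffding_ineq ?M I "\<lambda>i a. a i * Y i" "\<lambda>_. -B" "\<lambda>_. B" "\<Sum>i\<in>I. expectation (\<lambda>a. a i * Y i)"
    by unfold_locales (use assms indep bounded in auto)
  have "(\<Sum>i\<in>I. expectation (\<lambda>a. a i * Y i)) = 0"
    using centred by (intro sum.neutral) blast
  moreover have "(\<Sum>i\<in>I. (B - - B)\<^sup>2) = 4 * real (card I) * B\<^sup>2"
    by (simp add: power2_eq_square)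
  moreover have "0 < real (card I)"
    using assms by (simp add: card_gt_0_iff)
  ultimately show ?thesis
    using Hoeffding_ineq_abs_ge[OF \<open>0 \<le> s\<close>] assms by (simp add: power2_eq_square mult_ac)
qed

lemma rademacher_sum_le_prob:
  fixes Y :: "'i \<Rightarrow> real"
  assumes "finite I" "I \<noteq> {}" "0 < B" "\<And>i. i \<in> I \<Longrightarrow> \<bar>Y i\<bar> \<le> B" "0 < \<delta>" "\<delta> \<le> 2"
  shows "1 - \<delta> \<le> measure (PiM I (\<lambda>_. rademacher))
           {a \<in> space (PiM I (\<lambda>_. rademacher)).
              \<bar>\<Sum>i\<in>I. a i * Y i\<bar> \<le> B * sqrt (2 * real (card I) * ln (2 / \<delta>))}"
proof -
  let ?M = "PiM I (\<lambda>_. rademacher)"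
  let ?s = "B * sqrt (2 * real (card I) * ln (2 / \<delta>))"
  let ?bad = "{a \<in> space ?M. ?s \<le> \<bar>\<Sum>i\<in>I. a i * Y i\<bar>}"
  interpret prob_space ?M
    by (intro prob_space_PiM measure_pmf.prob_space_axioms)
  have "0 \<le> ln (2 / \<delta>)" "0 < real (card I)"
    using assms by (simp_all add: card_gt_0_iff)
  then have "measure ?M ?bad \<le> 2 * exp (- ?s\<^sup>2 / (2 * real (card I) * B\<^sup>2))"
    using assms by (intro rademacher_sum_tail_le) auto
  also have "\<dots> = \<delta>"
    using assms \<open>0 \<le> ln (2 / \<delta>)\<close> \<open>0 < real (card I)\<close>
    by (simp add: power_mult_distrib exp_minus field_simps)
  finally have "measure ?M ?bad \<le> \<delta>" .
  moreover have "?bad \<in> events"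
    by measurable
  ultimately have "1 - \<delta> \<le> measure ?M (space ?M - ?bad)"
    by (simp add: prob_compl)
  also have "\<dots> \<le> measure ?M {a \<in> space ?M. \<bar>\<Sum>i\<in>I. a i * Y i\<bar> \<le> ?s}"
    by (intro finite_measure_mono) auto
  finally show ?thesis .
qed

lemma measure_pair_measure_ge_mult:
  assumes "prob_space M1" "prob_space M2" and A: "A \<in> sets (M1 \<Otimes>\<^sub>M M2)" and G: "G \<in> sets M1"
    and "p \<le> measure M1 G" and section_bound: "\<And>w. w \<in> G \<Longrightarrow> q \<le> measure M2 (Pair w -` A)" and "0 \<le> q"
  shows "p * q \<le> measure (M1 \<Otimes>\<^sub>M M2) A"
proof -
  interpret M1: prob_space M1 by fact
  interpret M2: prob_space M2 by fact
  interpret pair_prob_space M1 M2 ..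
  have "ennreal (q * measure M1 G) = (\<integral>\<^sup>+ w. ennreal q * indicator G w \<partial>M1)"
    using G \<open>0 \<le> q\<close> by (simp add: nn_integral_cmult_indicator M1.emeasure_eq_measure ennreal_mult)
  also have "\<dots> \<le> (\<integral>\<^sup>+ w. emeasure M2 (Pair w -` A) \<partial>M1)"
    using section_bound by (intro nn_integral_mono)
      (auto simp: indicator_def M2.emeasure_eq_measure intro: ennreal_leI)
  also have "\<dots> = ennreal (measure (M1 \<Otimes>\<^sub>M M2) A)"
    by (simp add: M2.emeasure_pair_measure_alt[OF A, symmetric] emeasure_eq_measure)
  finally have "q * measure M1 G \<le> measure (M1 \<Otimes>\<^sub>M M2) A"
    by (simp add: ennreal_le_iff)
  moreover have "p * q \<le> q * measure M1 G"
    using \<open>p \<le> measure M1 G\<close> \<open>0 \<le> q\<close> by (metis mult.commute mult_right_mono)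
  ultimately show ?thesis
    by linarith
qed

lemma relu_lipschitz: "\<bar>relu a - relu b\<bar> \<le> \<bar>a - b\<bar>"
  unfolding relu_def by linarith

lemma sum_abs_le_sqrt_card:
  fixes x :: "nat \<Rightarrow> real"
  shows "(\<Sum>k<d. \<bar>x k\<bar>) \<le> sqrt (real d) * sqrt (\<Sum>k<d. (x k)\<^sup>2)"
proof -
  have "(\<Sum>k<d. 1 * \<bar>x k\<bar>)\<^sup>2 \<le> (\<Sum>k<d. 1\<^sup>2) * (\<Sum>k<d. \<bar>x k\<bar>\<^sup>2)"
    by (rule Cauchy_Schwarz_ineq_sum)
  then show ?thesis
    by (simp add: real_le_rsqrt flip: real_sqrt_mult)
qed

lemma abs_vmean_le:
  assumes "0 < d" "\<And>k. k < d \<Longrightarrow> \<bar>w k\<bar> \<le> T"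
  shows "\<bar>vmean d w\<bar> \<le> T"
proof -
  have "\<bar>\<Sum>k<d. w k\<bar> \<le> real d * T"
    using sum_bounded_above[of "{..<d}" "\<lambda>k. \<bar>w k\<bar>" T] assms(2) by (intro order.trans[OF sum_abs]) simp
  then show ?thesis
    using assms(1) by (simp add: vmean_def abs_divide divide_le_eq mult.commute)
qed

lemma sqrt_vvar_le:
  assumes "0 < d" "\<And>k. k < d \<Longrightarrow> \<bar>w k\<bar> \<le> T"
  shows "sqrt (vvar d w) \<le> 2 * T"
proof -
  have "T \<ge> 0"
    using assms(2)[of 0] assms(1) by linarith
  have E: "\<bar>vmean d w\<bar> \<le> T"
    by (rule abs_vmean_le[OF assms])
  have "(w k - vmean d w)\<^sup>2 \<le> (2 * T)\<^sup>2" if "k < d" for k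
  proof -
    have "\<bar>w k - vmean d w\<bar> \<le> 2 * T"
      using E assms(2)[OF that] by linarith
    then show ?thesis
      by (metis abs_ge_zero order.trans power2_abs power_mono)
  qed
  then have "(\<Sum>k<d. (w k - vmean d w)\<^sup>2) \<le> real d * (2 * T)\<^sup>2"
    using sum_bounded_above[of "{..<d}" "\<lambda>k. (w k - vmean d w)\<^sup>2" "(2 * T)\<^sup>2"] by simp
  then have "vvar d w \<le> (2 * T)\<^sup>2"
    using assms(1) by (simp add: vvar_def divide_le_eq mult.commute)
  then show ?thesis
    using \<open>T \<ge> 0\<close> by (simp add: real_sqrt_le_iff real_le_lsqrt)
qed

lemma dq_minus_ip_eq:
  "dq d w x - ip d w x = (\<Sum>k<d. (sqrt (vvar d w) * sgnvec d w k + vmean d w - w k) * x k)"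
  unfolding dq_def ip_def by (simp add: algebra_simps sum.distrib sum_subtractf sum_distrib_left)

lemma abs_dq_minus_ip_le:
  assumes "0 < d" "\<And>k. k < d \<Longrightarrow> \<bar>w k\<bar> \<le> T"
  shows "\<bar>dq d w x - ip d w x\<bar> \<le> 4 * T * sqrt (real d) * sqrt (\<Sum>k<d. (x k)\<^sup>2)"
proof -
  have "T \<ge> 0"
    using assms(2)[of 0] assms(1) by linarith
  have V: "sqrt (vvar d w) \<le> 2 * T" and E: "\<bar>vmean d w\<bar> \<le> T"
    using sqrt_vvar_le[OF assms] abs_vmean_le[OF assms] by auto
  have "0 \<le> vvar d w"
    by (simp add: vvar_def sum_nonneg)
  have coeff_le: "\<bar>sqrt (vvar d w) * sgnvec d w k + vmean d w - w k\<bar> \<le> 4 * T" if "k < d" for k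
  proof -
    have "\<bar>sgnvec d w k\<bar> = 1"
      by (simp add: sgnvec_def)
    then have "\<bar>sqrt (vvar d w) * sgnvec d w k\<bar> \<le> 2 * T"
      using V \<open>0 \<le> vvar d w\<close> by (simp add: abs_mult)
    then show ?thesis
      using E assms(2)[OF that] by linarith
  qed
  have "\<bar>dq d w x - ip d w x\<bar> \<le> (\<Sum>k<d. 4 * T * \<bar>x k\<bar>)"
    unfolding dq_minus_ip_eq
  proof (intro order.trans[OF sum_abs] sum_mono)
    fix k assume "k \<in> {..<d}"
    then show "\<bar>(sqrt (vvar d w) * sgnvec d w k + vmean d w - w k) * x k\<bar> \<le> 4 * T * \<bar>x k\<bar>"
      unfolding abs_mult using coeff_le by (intro mult_right_mono) auto
  qed
  also have "\<dots> = 4 * T * (\<Sum>k<d. \<bar>x k\<bar>)"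
    by (simp add: sum_distrib_left)
  also have "\<dots> \<le> 4 * T * (sqrt (real d) * sqrt (\<Sum>k<d. (x k)\<^sup>2))"
    using sum_abs_le_sqrt_card[of x d] \<open>T \<ge> 0\<close> by (intro mult_left_mono) auto
  finally show ?thesis
    by (simp add: mult_ac)
qed

lemma f_bin_minus_f_full:
  "f_bin \<kappa> m d x W a - f_full \<kappa> m d x W a
     = \<kappa> / sqrt (real m) * (\<Sum>r<m. a r * (relu (dq d (W r) x) - relu (ip d (W r) x)))"
  unfolding f_bin_def f_full_def by (simp add: right_diff_distrib sum_subtractf)

lemma measurable_init_weight [measurable]: "(\<lambda>\<omega>. fst \<omega> i) \<in> borel_measurable (init_measure m d)"
  unfolding init_measure_def by (rule measurable_compose[OF measurable_fst measurable_std_normal_component])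

lemma measurable_init_sign [measurable]: "(\<lambda>\<omega>. snd \<omega> r) \<in> borel_measurable (init_measure m d)"
  unfolding init_measure_def by (rule measurable_compose[OF measurable_snd measurable_rademacher_component])

lemma measurable_f_bin_minus_f_full [measurable]:
  "(\<lambda>\<omega>. f_bin \<kappa> m d x (Wcols (fst \<omega>)) (snd \<omega>) - f_full \<kappa> m d x (Wcols (fst \<omega>)) (snd \<omega>))
     \<in> borel_measurable (init_measure m d)"
  unfolding f_bin_def f_full_def relu_def dq_def ip_def sgnvec_def vvar_def vmean_def Wcols_def
  by measurable

lemma abs_relu_dq_minus_relu_ip_le:
  assumes "0 < d" "\<And>k. k < d \<Longrightarrow> \<bar>w k\<bar> \<le> T" "(\<Sum>k<d. (x k)\<^sup>2) = 1"
  shows "\<bar>relu (dq d w x) - relu (ip d w x)\<bar> \<le> 4 * T * sqrt (real d)"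
proof -
  have "\<bar>relu (dq d w x) - relu (ip d w x)\<bar> \<le> \<bar>dq d w x - ip d w x\<bar>"
    by (rule relu_lipschitz)
  also have "\<dots> \<le> 4 * T * sqrt (real d)"
    using abs_dq_minus_ip_le[of d w T x] assms by simp
  finally show ?thesis .
qed

lemma f_bin_minus_f_full_prob_given_weights:
  assumes "0 < m" "0 < d" "0 < T" and W: "\<And>r k. r < m \<Longrightarrow> k < d \<Longrightarrow> \<bar>W r k\<bar> \<le> T"
    and x: "(\<Sum>k<d. (x k)\<^sup>2) = 1" and "0 < \<delta>" "\<delta> \<le> 2" "0 \<le> \<kappa>"
  shows "1 - \<delta> \<le> measure (PiM {..<m} (\<lambda>_. rademacher))
           {a \<in> space (PiM {..<m} (\<lambda>_. rademacher)).
              \<bar>f_bin \<kappa> m d x W a - f_full \<kappa> m d x W a\<bar> \<le> \<kappa> * (4 * T * sqrt (real d)) * sqrt (2 * ln (2 / \<delta>))}"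
proof -
  let ?M = "PiM {..<m} (\<lambda>_. rademacher)"
  interpret prob_space ?M
    by (intro prob_space_PiM measure_pmf.prob_space_axioms)
  define Y where "Y r = relu (dq d (W r) x) - relu (ip d (W r) x)" for r
  define B where "B = 4 * T * sqrt (real d)"
  define s where "s = B * sqrt (2 * real m * ln (2 / \<delta>))"
  have "0 < B"
    using assms by (simp add: B_def)
  have "\<bar>Y r\<bar> \<le> B" if "r < m" for r
    using abs_relu_dq_minus_relu_ip_le[of d "W r" T x] W[OF that] assms(2) x by (simp add: Y_def B_def)
  then have "1 - \<delta> \<le> measure ?M {a \<in> space ?M. \<bar>\<Sum>r<m. a r * Y r\<bar> \<le> s}"
    using rademacher_sum_le_prob[of "{..<m}" B Y \<delta>] \<open>0 < B\<close> assms by (simp add: s_def lessThan_empty_iff)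
  also have "\<dots> \<le> measure ?M {a \<in> space ?M. \<bar>f_bin \<kappa> m d x W a - f_full \<kappa> m d x W a\<bar> \<le> \<kappa> * B * sqrt (2 * ln (2 / \<delta>))}"
  proof (rule finite_measure_mono)
    show "{a \<in> space ?M. \<bar>\<Sum>r<m. a r * Y r\<bar> \<le> s}
        \<subseteq> {a \<in> space ?M. \<bar>f_bin \<kappa> m d x W a - f_full \<kappa> m d x W a\<bar> \<le> \<kappa> * B * sqrt (2 * ln (2 / \<delta>))}"
    proof
      fix a assume a: "a \<in> {a \<in> space ?M. \<bar>\<Sum>r<m. a r * Y r\<bar> \<le> s}"
      then have "\<kappa> / sqrt (real m) * \<bar>\<Sum>r<m. a r * Y r\<bar> \<le> \<kappa> / sqrt (real m) * s"
        using \<open>0 \<le> \<kappa>\<close> by (intro mult_left_mono) auto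
      also have "\<dots> = \<kappa> * B * sqrt (2 * ln (2 / \<delta>))"
        using \<open>0 < m\<close> by (simp add: s_def real_sqrt_mult)
      finally show "a \<in> {a \<in> space ?M. \<bar>f_bin \<kappa> m d x W a - f_full \<kappa> m d x W a\<bar> \<le> \<kappa> * B * sqrt (2 * ln (2 / \<delta>))}"
        using a \<open>0 \<le> \<kappa>\<close> by (simp add: f_bin_minus_f_full abs_mult Y_def)
    qed
  qed (simp add: f_bin_minus_f_full)
  finally show ?thesis
    by (simp add: B_def)
qed

lemma prob_space_init_measure: "prob_space (init_measure m d)"
  unfolding init_measure_def
  by (intro prob_space_pair prob_space_PiM measure_pmf.prob_space_axioms) (simp add: prob_space_normal_density)

definition deviation_bound :: "real \<Rightarrow> nat \<Rightarrow> nat \<Rightarrow> real \<Rightarrow> real" where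
  "deviation_bound \<kappa> m d \<delta> = \<kappa> * (4 * normal_max_bound (m * d) (\<delta> / 2) * sqrt (real d)) * sqrt (2 * ln (4 / \<delta>))"

lemma f_bin_minus_f_full_prob:
  assumes "0 < m" "0 < d" and x: "(\<Sum>k<d. (x k)\<^sup>2) = 1" and "0 < \<delta>" "\<delta> \<le> 1" "0 \<le> \<kappa>"
  shows "1 - \<delta> \<le> measure (init_measure m d)
           {\<omega> \<in> space (init_measure m d).
              \<bar>f_bin \<kappa> m d x (Wcols (fst \<omega>)) (snd \<omega>) - f_full \<kappa> m d x (Wcols (fst \<omega>)) (snd \<omega>)\<bar>
                \<le> deviation_bound \<kappa> m d \<delta>}"
    (is "_ \<le> measure _ ?A")
proof -
  define T where "T = normal_max_bound (m * d) (\<delta> / 2)"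
  define A where "A = ?A"
  \<comment> \<open>An opaque name for the event, so that rewriting with \<open>split\<close> leaves it intact.\<close>
  let ?I = "{..<m} \<times> {..<d}"
  let ?M1 = "PiM ?I (\<lambda>_. std_normal_distribution)"
  let ?M2 = "PiM {..<m} (\<lambda>_. rademacher)"
  let ?G = "{w \<in> space ?M1. \<forall>i\<in>?I. \<bar>w i\<bar> < T}"
  have split: "init_measure m d = ?M1 \<Otimes>\<^sub>M ?M2"
    by (simp add: init_measure_def)
  have "prob_space ?M1" "prob_space ?M2"
    by (auto intro!: prob_space_PiM measure_pmf.prob_space_axioms simp: prob_space_normal_density)
  have "\<delta> / 2 < real (card ?I)"
    using real_mult_ge_one[OF \<open>0 < m\<close> \<open>0 < d\<close>] assms by (simp add: card_cartesian_product)
  then have "0 < T" and G: "1 - \<delta> / 2 \<le> measure ?M1 ?G"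
    using normal_max_bound_pos std_normal_PiM_all_bounded_prob[of ?I "\<delta> / 2"] assms
    by (auto simp: T_def card_cartesian_product)
  have "?G \<in> sets ?M1"
    by measurable
  have "A \<in> sets (init_measure m d)"
    unfolding A_def by measurable
  then have "A \<in> sets (?M1 \<Otimes>\<^sub>M ?M2)"
    by (simp only: split)
  have sections: "1 - \<delta> / 2 \<le> measure ?M2 (Pair w -` A)" if "w \<in> ?G" for w
  proof -
    have "Pair w -` A = {a \<in> space ?M2. \<bar>f_bin \<kappa> m d x (Wcols w) a - f_full \<kappa> m d x (Wcols w) a\<bar>
                             \<le> \<kappa> * (4 * T * sqrt (real d)) * sqrt (2 * ln (2 / (\<delta> / 2)))}"
      using that by (auto simp: A_def split space_pair_measure T_def deviation_bound_def)
    moreover have "\<bar>Wcols w r k\<bar> \<le> T" if "r < m" "k < d" for r k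
      using \<open>w \<in> ?G\<close> that by (auto simp: Wcols_def less_imp_le)
    ultimately show ?thesis
      using f_bin_minus_f_full_prob_given_weights[of m d T "Wcols w" x "\<delta> / 2" \<kappa>] assms \<open>0 < T\<close> by simp
  qed
  have "(1 - \<delta> / 2) * (1 - \<delta> / 2) \<le> measure (?M1 \<Otimes>\<^sub>M ?M2) A"
    using assms by (intro measure_pair_measure_ge_mult[OF \<open>prob_space ?M1\<close> \<open>prob_space ?M2\<close>
        \<open>A \<in> sets (?M1 \<Otimes>\<^sub>M ?M2)\<close> \<open>?G \<in> sets ?M1\<close> G sections]) auto
  moreover have "1 - \<delta> \<le> (1 - \<delta> / 2) * (1 - \<delta> / 2)"
    by (simp add: algebra_simps)
  ultimately show ?thesis
    by (simp add: A_def split)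
qed

lemma one_plus_ln_two_le:
  assumes "0 < m" "0 < d" "0 < \<delta>" "\<delta> < 0.1"
  shows "1 + ln 2 \<le> ln (real m * real d / \<delta>)"
proof -
  have "2 * exp 1 \<le> (10::real)"
    using exp_le by simp
  also have "\<dots> \<le> real m * real d / \<delta>"
    using real_mult_ge_one[OF assms(1,2)] assms(3,4) by (simp add: le_divide_eq)
  finally have "ln (2 * exp 1) \<le> ln (real m * real d / \<delta>)"
    using real_mult_ge_one[OF assms(1,2)] assms(3) by (subst ln_le_cancel_iff) auto
  then show ?thesis
    by (simp add: ln_mult)
qed

lemma deviation_factor_le:
  assumes "0 < m" "0 < d" "0 < \<delta>" "\<delta> < 0.1"
  shows "4 * normal_max_bound (m * d) (\<delta> / 2) * sqrt (2 * ln (4 / \<delta>)) \<le> 28 * ln (real m * real d / \<delta>)"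
proof -
  define L where "L = ln (real m * real d / \<delta>)"
  define k where "k = nat \<lceil>ln (real (m * d) / (\<delta> / 2))\<rceil>"
  have md: "1 \<le> real m * real d"
    using real_mult_ge_one assms by blast
  have L_ge: "1 + ln 2 \<le> L"
    unfolding L_def using one_plus_ln_two_le[OF assms] .
  have "0 < ln (2::real)" "ln (2::real) \<le> 1" "ln (4::real) = 2 * ln 2"
    using ln_le_minus_one[of 2] ln_realpow[of 2 2] by simp_all
  then have "0 < L" "ln 4 \<le> L"
    using L_ge by linarith+
  have "ln (real (m * d) / (\<delta> / 2)) = ln (2 * (real m * real d / \<delta>))"
    by (simp add: field_simps)
  also have "\<dots> = ln 2 + L"
    unfolding L_def using md assms by (intro ln_mult_pos) auto
  finally have "real k = of_int \<lceil>ln 2 + L\<rceil>"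
    using \<open>0 < ln 2\<close> \<open>0 < L\<close> by (simp add: k_def)
  then have k_le: "real k \<le> 2 * L"
    using L_ge by linarith
  have "ln (4 / \<delta>) = ln 4 + (L - ln (real m * real d))"
    using md assms by (simp add: L_def ln_div)
  then have l4_le: "ln (4 / \<delta>) \<le> 2 * L"
    using ln_ge_zero[OF md] \<open>ln 4 \<le> L\<close> by linarith
  have "4 * exp 1 * real k * ln (4 / \<delta>) \<le> 4 * 3 * (2 * L) * (2 * L)"
    using exp_le k_le l4_le assms by (intro mult_mono) auto
  also have "\<dots> \<le> (7 * L)\<^sup>2"
    by (simp add: power2_eq_square)
  finally have "sqrt (4 * exp 1 * real k * ln (4 / \<delta>)) \<le> 7 * L"
    using \<open>0 < L\<close> by (simp add: real_sqrt_le_iff real_le_lsqrt)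
  moreover have "normal_max_bound (m * d) (\<delta> / 2) * sqrt (2 * ln (4 / \<delta>)) = sqrt (4 * exp 1 * real k * ln (4 / \<delta>))"
    by (simp add: normal_max_bound_def k_def flip: real_sqrt_mult)
  ultimately show ?thesis
    by (simp add: L_def)
qed

lemma deviation_bound_le:
  assumes "0 < m" "0 < d" "0 < \<delta>" "\<delta> < 0.1" "0 \<le> \<kappa>"
  shows "deviation_bound \<kappa> m d \<delta> \<le> 28 * \<kappa> * sqrt (real d) * ln (real m * real d / \<delta>)"
proof -
  have "deviation_bound \<kappa> m d \<delta> = \<kappa> * sqrt (real d) * (4 * normal_max_bound (m * d) (\<delta> / 2) * sqrt (2 * ln (4 / \<delta>)))"
    by (simp add: deviation_bound_def mult_ac)
  also have "\<dots> \<le> \<kappa> * sqrt (real d) * (28 * ln (real m * real d / \<delta>))"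
    using deviation_factor_le[OF assms(1-4)] assms(5) by (intro mult_left_mono) auto
  finally show ?thesis
    by (simp add: mult_ac)
qed

theorem lemma5p1:
  shows "\<exists>c>0. \<forall>(m::nat) (d::nat) (\<kappa>::real) (\<delta>::real) (x::nat \<Rightarrow> real) (\<epsilon>::real).
     m \<ge> 1 \<longrightarrow> d \<ge> 1 \<longrightarrow> 0 < \<kappa> \<longrightarrow> \<kappa> \<le> 1 \<longrightarrow> 0 < \<delta> \<longrightarrow> \<delta> < 0.1 \<longrightarrow>
     sqrt (\<Sum>k<d. (x k)\<^sup>2) = 1 \<longrightarrow> 0 < \<epsilon> \<longrightarrow>
     (let D = sqrt (ln (real m * real d / \<delta>)) in
        \<kappa> \<le> c * \<epsilon> / (sqrt (real d) * D\<^sup>2)) \<longrightarrow>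
     measure (init_measure m d)
       {\<omega> \<in> space (init_measure m d).
          \<bar>f_bin \<kappa> m d x (Wcols (fst \<omega>)) (snd \<omega>) - f_full \<kappa> m d x (Wcols (fst \<omega>)) (snd \<omega>)\<bar> \<le> \<epsilon>}
       \<ge> 1 - \<delta>"
proof (intro exI[of _ "1 / 28"] conjI allI impI)
  fix m d :: nat and \<kappa> \<delta> \<epsilon> :: real and x :: "nat \<Rightarrow> real"
  assume "m \<ge> 1" "d \<ge> 1" "0 < \<kappa>" "\<kappa> \<le> 1" "0 < \<delta>" "\<delta> < 0.1" "sqrt (\<Sum>k<d. (x k)\<^sup>2) = 1" "0 < \<epsilon>"
    and \<kappa>_le: "let D = sqrt (ln (real m * real d / \<delta>)) in \<kappa> \<le> 1 / 28 * \<epsilon> / (sqrt (real d) * D\<^sup>2)"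
  then have "0 < m" "0 < d" and x: "(\<Sum>k<d. (x k)\<^sup>2) = 1"
    by auto
  have "0 < ln (real m * real d / \<delta>)"
    using real_mult_ge_one[OF \<open>0 < m\<close> \<open>0 < d\<close>] \<open>0 < \<delta>\<close> \<open>\<delta> < 0.1\<close> by simp
  then have "28 * \<kappa> * sqrt (real d) * ln (real m * real d / \<delta>) \<le> \<epsilon>"
    using \<kappa>_le \<open>0 < d\<close> by (simp add: Let_def le_divide_eq mult_ac)
  then have "deviation_bound \<kappa> m d \<delta> \<le> \<epsilon>"
    using deviation_bound_le[of m d \<delta> \<kappa>] \<open>0 < m\<close> \<open>0 < d\<close> \<open>0 < \<delta>\<close> \<open>\<delta> < 0.1\<close> \<open>0 < \<kappa>\<close> by linarith
  interpret prob_space "init_measure m d"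
    by (rule prob_space_init_measure)
  have "1 - \<delta> \<le> prob {\<omega> \<in> space (init_measure m d).
      \<bar>f_bin \<kappa> m d x (Wcols (fst \<omega>)) (snd \<omega>) - f_full \<kappa> m d x (Wcols (fst \<omega>)) (snd \<omega>)\<bar> \<le> deviation_bound \<kappa> m d \<delta>}"
    using \<open>0 < m\<close> \<open>0 < d\<close> x \<open>0 < \<delta>\<close> \<open>\<delta> < 0.1\<close> \<open>0 < \<kappa>\<close> by (intro f_bin_minus_f_full_prob) auto
  also have "\<dots> \<le> prob {\<omega> \<in> space (init_measure m d).
      \<bar>f_bin \<kappa> m d x (Wcols (fst \<omega>)) (snd \<omega>) - f_full \<kappa> m d x (Wcols (fst \<omega>)) (snd \<omega>)\<bar> \<le> \<epsilon>}"
    using \<open>deviation_bound \<kappa> m d \<delta> \<le> \<epsilon>\<close> by (intro finite_measure_mono) auto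
  finally show "prob {\<omega> \<in> space (init_measure m d).
      \<bar>f_bin \<kappa> m d x (Wcols (fst \<omega>)) (snd \<omega>) - f_full \<kappa> m d x (Wcols (fst \<omega>)) (snd \<omega>)\<bar> \<le> \<epsilon>} \<ge> 1 - \<delta>" .
qed simp

end
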